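(* Let $L_1,\dots,L_m>0$ and $L=\sum_{i=1}^m L_i$. Let $\Gamma$ be the chain of loops with vertices $w_0,w_1,\dots,w_m$ where, for each $i$, $w_{i-1}$ and $w_i$ are joined by two parallel edges each of length $L_i/2$ (so the $i$-th loop has length $L_i$). Then the Titchmarsh–Weil $M$-function of $\Gamma$ at the end vertex $w_0$ (with all other vertices, including $w_m$, interior) depends only on $L$ and coincides with the $M$-function of a loop of length $L$ at any of its points. *)

theory Defs
  imports "HOL-Analysis.Analysis"
begin

text \<open>Edge e is identified with the
  interval [0, len e], the point 0 being ini e and the point len e being ter e.\<close>

definition edge_eig_sol :: "real \<Rightarrow> complex \<Rightarrow> (real \<Rightarrow> complex) \<Rightarrow> (real \<Rightarrow> complex) \<Rightarrow> bool" where
  "edge_eig_sol l z u u' \<longleftrightarrow>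
     (\<forall>x\<in>{0..l}. (u has_vector_derivative u' x) (at x within {0..l}) \<and>
                  (u' has_vector_derivative (- z * u x)) (at x within {0..l}))"

definition graph_vertices :: "'e set \<Rightarrow> ('e \<Rightarrow> 'v) \<Rightarrow> ('e \<Rightarrow> 'v) \<Rightarrow> 'v set" where
  "graph_vertices E ini ter = ini ` E \<union> ter ` E"

text \<open>Sum of the derivatives at vertex v taken in the directions pointing into the edges.\<close>
definition flux :: "'e set \<Rightarrow> ('e \<Rightarrow> real) \<Rightarrow> ('e \<Rightarrow> 'v) \<Rightarrow> ('e \<Rightarrow> 'v) \<Rightarrow> ('e \<Rightarrow> real \<Rightarrow> complex) \<Rightarrow> 'v \<Rightarrow> complex" where
  "flux E len ini ter U' v =
     (\<Sum>e\<in>{e\<in>E. ini e = v}. U' e 0) - (\<Sum>e\<in>{e\<in>E. ter e = v}. U' e (len e))"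

definition qg_solution :: "'e set \<Rightarrow> ('e \<Rightarrow> real) \<Rightarrow> ('e \<Rightarrow> 'v) \<Rightarrow> ('e \<Rightarrow> 'v) \<Rightarrow> 'v \<Rightarrow> complex
     \<Rightarrow> ('e \<Rightarrow> real \<Rightarrow> complex) \<Rightarrow> ('e \<Rightarrow> real \<Rightarrow> complex) \<Rightarrow> ('v \<Rightarrow> complex) \<Rightarrow> bool" where
  "qg_solution E len ini ter v0 z U U' phi \<longleftrightarrow>
     (\<forall>e\<in>E. edge_eig_sol (len e) z (U e) (U' e)) \<and>
     (\<forall>e\<in>E. U e 0 = phi (ini e) \<and> U e (len e) = phi (ter e)) \<and>
     (\<forall>v\<in>graph_vertices E ini ter. v \<noteq> v0 \<longrightarrow> flux E len ini ter U' v = 0)"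

definition is_M_value :: "'e set \<Rightarrow> ('e \<Rightarrow> real) \<Rightarrow> ('e \<Rightarrow> 'v) \<Rightarrow> ('e \<Rightarrow> 'v) \<Rightarrow> 'v \<Rightarrow> complex \<Rightarrow> complex \<Rightarrow> bool" where
  "is_M_value E len ini ter v0 z M \<longleftrightarrow>
     (\<exists>U U' phi. qg_solution E len ini ter v0 z U U' phi \<and> phi v0 = 1 \<and>
                 flux E len ini ter U' v0 = M)"

definition M_function :: "'e set \<Rightarrow> ('e \<Rightarrow> real) \<Rightarrow> ('e \<Rightarrow> 'v) \<Rightarrow> ('e \<Rightarrow> 'v) \<Rightarrow> 'v \<Rightarrow> complex \<Rightarrow> complex" where
  "M_function E len ini ter v0 z = (THE M. is_M_value E len ini ter v0 z M)"

text \<open>Chain of m loops: vertices 0..m; edges (i,b), i in {1..m}, b :: bool, join i-1 to i,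
  each of length L i / 2.\<close>
definition chain_edges :: "nat \<Rightarrow> (nat \<times> bool) set" where
  "chain_edges m = {1..m} \<times> UNIV"

definition chain_len :: "(nat \<Rightarrow> real) \<Rightarrow> nat \<times> bool \<Rightarrow> real" where
  "chain_len L e = L (fst e) / 2"

definition chain_ini :: "nat \<times> bool \<Rightarrow> nat" where
  "chain_ini e = fst e - 1"

definition chain_ter :: "nat \<times> bool \<Rightarrow> nat" where
  "chain_ter e = fst e"

end

theory Submission
  imports Defs
begin

text \<open>For non-real z the Dirichlet-to-Neumann problem at the boundary vertex has at most one
  solution: on each edge the energy Im z * Im (conj u * u') is non-increasing, with derivative
  -(Im z)^2 |u|^2, and summing over the edges, the Kirchhoff conditions make the total change
  vanish once the boundary value is 0. So the M-function of either graph is the value realised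
  by any explicit solution. For both graphs such a solution is given by the standing wave
  cos (sqrt z (x - L/2)) / cos (sqrt z L/2) on the loop of length L parametrised by [0, L]:
  on the chain, the two parallel edges of the i-th loop both carry the piece of that wave
  between the positions of w_(i-1) and w_i, the chain covering the first half [0, L/2]; at the
  far end w_m = L/2 its derivative vanishes, so the Kirchhoff condition holds there too.\<close>

definition edge_energy :: "complex \<Rightarrow> (real \<Rightarrow> complex) \<Rightarrow> (real \<Rightarrow> complex) \<Rightarrow> real \<Rightarrow> real" where
  "edge_energy z u u' x = Im z * Im (cnj (u x) * u' x)"

lemma Im_cnj_mult_eigen: "Im (cnj a * (- z * a) + cnj b * b) = - Im z * (cmod a)\<^sup>2"
proof -
  have "(cmod a)\<^sup>2 = (Re a)\<^sup>2 + (Im a)\<^sup>2" by (simp add: cmod_power2)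
  then show ?thesis by (simp add: algebra_simps power2_eq_square)
qed

lemma edge_energy_has_vector_derivative:
  assumes "edge_eig_sol l z u u'" and "x \<in> {0..l}"
  shows "(edge_energy z u u' has_vector_derivative - (Im z)\<^sup>2 * (cmod (u x))\<^sup>2) (at x within {0..l})"
proof -
  from assms have du: "(u has_vector_derivative u' x) (at x within {0..l})"
    and du': "(u' has_vector_derivative (- z * u x)) (at x within {0..l})"
    unfolding edge_eig_sol_def by auto
  have "((\<lambda>x. cnj (u x) * u' x) has_vector_derivative
          cnj (u x) * (- z * u x) + cnj (u' x) * u' x) (at x within {0..l})"
    by (intro has_vector_derivative_mult has_vector_derivative_cnj du du')
  from bounded_linear.has_vector_derivative[OF bounded_linear_Im this]
  have "((\<lambda>x. Im (cnj (u x) * u' x)) has_vector_derivative - Im z * (cmod (u x))\<^sup>2)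
          (at x within {0..l})"
    by (simp only: Im_cnj_mult_eigen)
  from bounded_linear.has_vector_derivative[OF bounded_linear_mult_right[of "Im z"] this]
  have "((\<lambda>x. Im z * Im (cnj (u x) * u' x)) has_vector_derivative
          Im z * (- Im z * (cmod (u x))\<^sup>2)) (at x within {0..l})" .
  moreover have "Im z * (- Im z * (cmod (u x))\<^sup>2) = - (Im z)\<^sup>2 * (cmod (u x))\<^sup>2"
    by (simp add: power2_eq_square)
  ultimately show ?thesis
    unfolding edge_energy_def by metis
qed

lemma edge_energy_antimono:
  assumes "edge_eig_sol l z u u'" and "0 \<le> a" "a \<le> b" "b \<le> l"
  shows "edge_energy z u u' b \<le> edge_energy z u u' a"
proof -
  define D where "D x = - (Im z)\<^sup>2 * (cmod (u x))\<^sup>2" for x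
  have "\<exists>x\<in>{a..b}. edge_energy z u u' b - edge_energy z u u' a = (b - a) *\<^sub>R D x"
  proof (rule mvt_very_simple[OF \<open>a \<le> b\<close>])
    fix x assume "a \<le> x" "x \<le> b"
    with assms have "(edge_energy z u u' has_vector_derivative D x) (at x within {0..l})"
      unfolding D_def by (intro edge_energy_has_vector_derivative) auto
    then have "(edge_energy z u u' has_vector_derivative D x) (at x within {a..b})"
      by (rule has_vector_derivative_within_subset) (use assms in auto)
    then show "(edge_energy z u u' has_derivative (\<lambda>h. h *\<^sub>R D x)) (at x within {a..b})"
      by (simp add: has_vector_derivative_def)
  qed
  then obtain x where "edge_energy z u u' b - edge_energy z u u' a = (b - a) * D x"
    by auto
  moreover have "(b - a) * D x \<le> 0"
    using \<open>a \<le> b\<close> unfolding D_def by (simp add: mult_nonneg_nonpos)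
  ultimately show ?thesis by linarith
qed

lemma edge_energy_const_imp_zero:
  assumes sol: "edge_eig_sol l z u u'" and "l > 0" and "Im z \<noteq> 0"
    and eq: "edge_energy z u u' l = edge_energy z u u' 0"
  shows "\<forall>x\<in>{0..l}. u x = 0 \<and> u' x = 0"
proof -
  have const: "edge_energy z u u' x = edge_energy z u u' 0" if "x \<in> {0..l}" for x
    using edge_energy_antimono[OF sol, of 0 x] edge_energy_antimono[OF sol, of x l] that eq
    by auto
  have u0: "u x = 0" if x: "x \<in> {0..l}" for x
  proof -
    have "(edge_energy z u u' has_vector_derivative 0) (at x within {0..l})"
      by (rule has_vector_derivative_transform[OF x _
            has_vector_derivative_const[of "edge_energy z u u' 0"]]) (use const in blast)
    with edge_energy_has_vector_derivative[OF sol x]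
    have "(Im z)\<^sup>2 * (cmod (u x))\<^sup>2 = 0"
      using vector_derivative_unique_within_closed_interval[of 0 l x] \<open>l > 0\<close> x by fastforce
    then show ?thesis using \<open>Im z \<noteq> 0\<close> by simp
  qed
  show ?thesis
  proof
    fix x assume x: "x \<in> {0..l}"
    have "(u has_vector_derivative 0) (at x within {0..l})"
      by (rule has_vector_derivative_transform[OF x _ has_vector_derivative_const[of 0]])
        (use u0 in auto)
    moreover have "(u has_vector_derivative u' x) (at x within {0..l})"
      using sol x unfolding edge_eig_sol_def by auto
    ultimately have "u' x = 0"
      using vector_derivative_unique_within_closed_interval[of 0 l x u "u' x" 0] \<open>l > 0\<close> x by auto
    then show "u x = 0 \<and> u' x = 0" using u0 x by auto
  qed
qed

lemma sum_group_by_image: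
  fixes g :: "'v \<Rightarrow> 'a::comm_semiring_0"
  assumes "finite E" "h ` E \<subseteq> V" "finite V"
  shows "(\<Sum>e\<in>E. g (h e) * k e) = (\<Sum>v\<in>V. g v * (\<Sum>e\<in>{e\<in>E. h e = v}. k e))"
proof -
  have "(\<Sum>e\<in>E. g (h e) * k e) = (\<Sum>v\<in>h ` E. \<Sum>e\<in>{e\<in>E. h e = v}. g (h e) * k e)"
    by (rule sum.image_gen[OF assms(1)])
  also have "\<dots> = (\<Sum>v\<in>h ` E. g v * (\<Sum>e\<in>{e\<in>E. h e = v}. k e))"
    by (simp add: sum_distrib_left)
  also have "\<dots> = (\<Sum>v\<in>V. g v * (\<Sum>e\<in>{e\<in>E. h e = v}. k e))"
  proof (rule sum.mono_neutral_left[OF assms(3) assms(2)], intro ballI)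
    fix v assume "v \<in> V - h ` E"
    then have "{e\<in>E. h e = v} = {}" by auto
    then show "g v * (\<Sum>e\<in>{e\<in>E. h e = v}. k e) = 0" by (simp only: sum.empty mult_zero_right)
  qed
  finally show ?thesis .
qed

lemma sum_cnj_vertex_flux:
  assumes "finite E" and "\<forall>e\<in>E. U e 0 = phi (ini e) \<and> U e (len e) = phi (ter e)"
  shows "(\<Sum>v\<in>graph_vertices E ini ter. cnj (phi v) * flux E len ini ter U' v) =
         (\<Sum>e\<in>E. cnj (U e 0) * U' e 0 - cnj (U e (len e)) * U' e (len e))"
proof -
  let ?V = "graph_vertices E ini ter"
  have V: "finite ?V" "ini ` E \<subseteq> ?V" "ter ` E \<subseteq> ?V"
    using assms(1) by (auto simp: graph_vertices_def)
  have "(\<Sum>v\<in>?V. cnj (phi v) * flux E len ini ter U' v) =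
      (\<Sum>e\<in>E. cnj (phi (ini e)) * U' e 0) - (\<Sum>e\<in>E. cnj (phi (ter e)) * U' e (len e))"
    using sum_group_by_image[OF assms(1) V(2,1), of "\<lambda>v. cnj (phi v)" "\<lambda>e. U' e 0"]
      sum_group_by_image[OF assms(1) V(3,1), of "\<lambda>v. cnj (phi v)" "\<lambda>e. U' e (len e)"]
    by (simp add: flux_def right_diff_distrib sum_subtractf)
  also have "\<dots> = (\<Sum>e\<in>E. cnj (U e 0) * U' e 0 - cnj (U e (len e)) * U' e (len e))"
    using assms(2) by (simp add: sum_subtractf)
  finally show ?thesis .
qed

lemma qg_solution_zero_flux:
  assumes fin: "finite E" and len: "\<forall>e\<in>E. len e > 0" and "Im z \<noteq> 0"
    and sol: "qg_solution E len ini ter v0 z U U' phi" and "phi v0 = 0"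
  shows "flux E len ini ter U' v0 = 0"
proof -
  let ?dE = "\<lambda>e. edge_energy z (U e) (U' e) 0 - edge_energy z (U e) (U' e) (len e)"
  have es: "edge_eig_sol (len e) z (U e) (U' e)" if "e \<in> E" for e
    using sol that unfolding qg_solution_def by auto
  have bd: "\<forall>e\<in>E. U e 0 = phi (ini e) \<and> U e (len e) = phi (ter e)"
    using sol unfolding qg_solution_def by auto
  have vertex_terms: "(\<Sum>v\<in>graph_vertices E ini ter. cnj (phi v) * flux E len ini ter U' v) = 0"
    using sol \<open>phi v0 = 0\<close> unfolding qg_solution_def by (intro sum.neutral) auto
  have "(\<Sum>e\<in>E. ?dE e) =
      Im z * Im (\<Sum>e\<in>E. cnj (U e 0) * U' e 0 - cnj (U e (len e)) * U' e (len e))"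
    unfolding edge_energy_def
    by (simp only: Im_sum minus_complex.sel sum_distrib_left right_diff_distrib sum_subtractf)
  also have "\<dots> = Im z * Im (\<Sum>v\<in>graph_vertices E ini ter. cnj (phi v) * flux E len ini ter U' v)"
    by (simp only: sum_cnj_vertex_flux[of E U phi ini len ter U', OF fin bd])
  also have "\<dots> = 0"
    by (simp only: vertex_terms zero_complex.sel mult_zero_right)
  finally have "(\<Sum>e\<in>E. ?dE e) = 0" .
  moreover have "?dE e \<ge> 0" if "e \<in> E" for e
    using edge_energy_antimono[OF es[OF that], of 0 "len e"] len that by fastforce
  ultimately have balanced: "?dE e = 0" if "e \<in> E" for e
    using sum_nonneg_eq_0_iff[OF fin, of ?dE] that by blast
  have "U' e 0 = 0 \<and> U' e (len e) = 0" if "e \<in> E" for e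
  proof -
    have "len e > 0" using len that by blast
    with edge_energy_const_imp_zero[OF es[OF that] this \<open>Im z \<noteq> 0\<close>] balanced[OF that]
    show ?thesis by auto
  qed
  then show ?thesis unfolding flux_def by simp
qed

lemma edge_eig_sol_diff:
  assumes "edge_eig_sol l z u u'" and "edge_eig_sol l z v v'"
  shows "edge_eig_sol l z (\<lambda>x. u x - v x) (\<lambda>x. u' x - v' x)"
  unfolding edge_eig_sol_def
proof
  fix x assume "x \<in> {0..l}"
  with assms have du: "(u has_vector_derivative u' x) (at x within {0..l})"
      "(u' has_vector_derivative - z * u x) (at x within {0..l})"
    and dv: "(v has_vector_derivative v' x) (at x within {0..l})"
      "(v' has_vector_derivative - z * v x) (at x within {0..l})"
    unfolding edge_eig_sol_def by auto
  show "((\<lambda>x. u x - v x) has_vector_derivative u' x - v' x) (at x within {0..l}) \<and>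
      ((\<lambda>x. u' x - v' x) has_vector_derivative - z * (u x - v x)) (at x within {0..l})"
    using has_vector_derivative_diff[OF du(1) dv(1)] has_vector_derivative_diff[OF du(2) dv(2)]
    by (simp add: algebra_simps)
qed

lemma flux_diff:
  "flux E len ini ter (\<lambda>e x. U' e x - V' e x) v = flux E len ini ter U' v - flux E len ini ter V' v"
  unfolding flux_def by (simp add: sum_subtractf)

lemma qg_solution_diff:
  assumes "qg_solution E len ini ter v0 z U U' phi" and "qg_solution E len ini ter v0 z V V' psi"
  shows "qg_solution E len ini ter v0 z (\<lambda>e x. U e x - V e x) (\<lambda>e x. U' e x - V' e x)
           (\<lambda>v. phi v - psi v)"
  using assms unfolding qg_solution_def flux_diff by (simp add: edge_eig_sol_diff)

lemma is_M_value_unique: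
  assumes "finite E" and "\<forall>e\<in>E. len e > 0" and "Im z \<noteq> 0"
    and "is_M_value E len ini ter v0 z M" and "is_M_value E len ini ter v0 z N"
  shows "M = N"
proof -
  obtain U U' phi where U: "qg_solution E len ini ter v0 z U U' phi" "phi v0 = 1"
    "flux E len ini ter U' v0 = M"
    using assms(4) unfolding is_M_value_def by auto
  obtain V V' psi where V: "qg_solution E len ini ter v0 z V V' psi" "psi v0 = 1"
    "flux E len ini ter V' v0 = N"
    using assms(5) unfolding is_M_value_def by auto
  have "flux E len ini ter (\<lambda>e x. U' e x - V' e x) v0 = 0"
    using qg_solution_zero_flux[OF assms(1-3) qg_solution_diff[OF U(1) V(1)]] U(2) V(2) by simp
  then show ?thesis using U(3) V(3) unfolding flux_diff by simp
qed

lemma M_function_eqI: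
  assumes "finite E" and "\<forall>e\<in>E. len e > 0" and "Im z \<noteq> 0"
    and "is_M_value E len ini ter v0 z M"
  shows "M_function E len ini ter v0 z = M"
  unfolding M_function_def
proof (rule the_equality)
  show "is_M_value E len ini ter v0 z M" by fact
  show "N = M" if "is_M_value E len ini ter v0 z N" for N
    by (rule is_M_value_unique[OF assms(1-3) that assms(4)])
qed

definition standing_wave :: "complex \<Rightarrow> real \<Rightarrow> real \<Rightarrow> complex" where
  "standing_wave z Lt x = cos (csqrt z * of_real (x - Lt / 2)) / cos (csqrt z * of_real (Lt / 2))"

definition standing_wave_deriv :: "complex \<Rightarrow> real \<Rightarrow> real \<Rightarrow> complex" where
  "standing_wave_deriv z Lt x =
     - csqrt z * sin (csqrt z * of_real (x - Lt / 2)) / cos (csqrt z * of_real (Lt / 2))"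

lemma cos_csqrt_mult_of_real_nonzero:
  assumes "Im z \<noteq> 0" and "a \<noteq> 0"
  shows "cos (csqrt z * of_real a) \<noteq> 0"
proof
  assume "cos (csqrt z * of_real a) = 0"
  then obtain n :: int where "csqrt z * of_real a = of_real (n * pi) + of_real pi / 2"
    unfolding cos_eq_0 by blast
  then have "Im (csqrt z * of_real a) = 0" by simp
  then have "Im (csqrt z) = 0" using assms(2) by simp
  moreover have "Im ((csqrt z)\<^sup>2) = 2 * Re (csqrt z) * Im (csqrt z)" by (rule Im_power2)
  ultimately show False using assms(1) by (metis power2_csqrt mult_zero_right)
qed

lemma edge_eig_sol_standing_wave:
  "edge_eig_sol l z (\<lambda>x. standing_wave z Lt (x + s)) (\<lambda>x. standing_wave_deriv z Lt (x + s))"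
  unfolding edge_eig_sol_def
proof (intro ballI conjI)
  fix x :: real
  define k where "k = csqrt z"
  define c where "c = cos (k * of_real (Lt / 2))"
  define b where "b = complex_of_real (s - Lt / 2)"
  have shift: "complex_of_real (y + s - Lt / 2) = of_real y + b" for y
    unfolding b_def by simp
  have wave: "standing_wave z Lt (y + s) = cos (k * (of_real y + b)) / c" for y
    unfolding standing_wave_def k_def c_def by (simp only: shift diff_add_eq)
  have wave': "standing_wave_deriv z Lt (y + s) = - k * sin (k * (of_real y + b)) / c" for y
    unfolding standing_wave_deriv_def k_def c_def by (simp only: shift diff_add_eq)
  have "((\<lambda>w. cos (k * (w + b)) / c) has_field_derivative
          - k * sin (k * (of_real x + b)) / c) (at (of_real x))"
    by (intro DERIV_cdivide) (auto intro!: derivative_eq_intros)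
  from has_vector_derivative_real_field[OF this]
  show "((\<lambda>x. standing_wave z Lt (x + s)) has_vector_derivative standing_wave_deriv z Lt (x + s))
          (at x within {0..l})"
    unfolding wave wave' .
  have "((\<lambda>w. - k * sin (k * (w + b)) / c) has_field_derivative
          - k * (k * cos (k * (of_real x + b))) / c) (at (of_real x))"
    by (intro DERIV_cdivide) (auto intro!: derivative_eq_intros)
  moreover have "- k * (k * cos (k * (of_real x + b))) / c = - z * (cos (k * (of_real x + b)) / c)"
    unfolding k_def by (simp add: power2_eq_square[symmetric])
  ultimately have "((\<lambda>w. - k * sin (k * (w + b)) / c) has_field_derivative
          - z * (cos (k * (of_real x + b)) / c)) (at (of_real x))"
    by (simp only:)
  from has_vector_derivative_real_field[OF this]
  show "((\<lambda>x. standing_wave_deriv z Lt (x + s)) has_vector_derivative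
          - z * standing_wave z Lt (x + s)) (at x within {0..l})"
    unfolding wave wave' .
qed

lemma standing_wave_ends:
  assumes "Im z \<noteq> 0" and "Lt \<noteq> 0"
  shows "standing_wave z Lt 0 = 1" and "standing_wave z Lt Lt = 1"
  using cos_csqrt_mult_of_real_nonzero[OF assms(1), of "Lt / 2"] assms(2)
  by (simp_all add: standing_wave_def field_simps)

lemma standing_wave_deriv_middle: "standing_wave_deriv z Lt (Lt / 2) = 0"
  by (simp add: standing_wave_deriv_def)

lemma standing_wave_deriv_end: "standing_wave_deriv z Lt Lt = - standing_wave_deriv z Lt 0"
  by (simp add: standing_wave_deriv_def field_simps)

lemma loop_is_M_value:
  assumes "Im z \<noteq> 0" and "Lt \<noteq> 0"
  shows "is_M_value {()} (\<lambda>_. Lt) (\<lambda>_. ()) (\<lambda>_. ()) () z (2 * standing_wave_deriv z Lt 0)"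
proof -
  have "edge_eig_sol Lt z (standing_wave z Lt) (standing_wave_deriv z Lt)"
    using edge_eig_sol_standing_wave[of Lt z Lt 0] by simp
  then have "qg_solution {()} (\<lambda>_. Lt) (\<lambda>_. ()) (\<lambda>_. ()) () z
      (\<lambda>_. standing_wave z Lt) (\<lambda>_. standing_wave_deriv z Lt) (\<lambda>_. 1)"
    unfolding qg_solution_def using standing_wave_ends[OF assms] by simp
  moreover have "flux {()} (\<lambda>_. Lt) (\<lambda>_. ()) (\<lambda>_. ()) (\<lambda>_. standing_wave_deriv z Lt) () =
      2 * standing_wave_deriv z Lt 0"
    unfolding flux_def standing_wave_deriv_end by simp
  ultimately show ?thesis unfolding is_M_value_def by blast
qed

lemma chain_edges_from:
  "{e \<in> chain_edges m. chain_ini e = v} = (if v < m then {Suc v} \<times> UNIV else {})"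
  unfolding chain_edges_def chain_ini_def by auto

lemma chain_edges_into:
  "{e \<in> chain_edges m. chain_ter e = v} = (if 1 \<le> v \<and> v \<le> m then {v} \<times> UNIV else {})"
  unfolding chain_edges_def chain_ter_def by auto

lemma flux_chain:
  "flux (chain_edges m) (chain_len L) chain_ini chain_ter U' v =
     (if v < m then U' (Suc v, True) 0 + U' (Suc v, False) 0 else 0) -
     (if 1 \<le> v \<and> v \<le> m then U' (v, True) (L v / 2) + U' (v, False) (L v / 2) else 0)"
  unfolding flux_def chain_edges_from chain_edges_into by (simp add: chain_len_def UNIV_bool)

lemma graph_vertices_chain: "1 \<le> m \<Longrightarrow> graph_vertices (chain_edges m) chain_ini chain_ter = {0..m}"
  unfolding graph_vertices_def chain_edges_def chain_ini_def chain_ter_def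
  by (auto simp: image_iff) (use not_less_eq_eq in force)

definition chain_pos :: "(nat \<Rightarrow> real) \<Rightarrow> nat \<Rightarrow> real" where
  "chain_pos L j = (\<Sum>i=1..j. L i) / 2"

lemma chain_pos_0 [simp]: "chain_pos L 0 = 0"
  by (simp add: chain_pos_def)

lemma chain_pos_Suc: "chain_pos L (Suc j) = chain_pos L j + L (Suc j) / 2"
  by (simp add: chain_pos_def sum.cl_ivl_Suc add_divide_distrib)

lemma chain_is_M_value:
  assumes "1 \<le> m" and "\<forall>i\<in>{1..m}. L i > 0" and "Im z \<noteq> 0"
  defines "Lt \<equiv> \<Sum>i=1..m. L i"
  shows "is_M_value (chain_edges m) (chain_len L) chain_ini chain_ter 0 z
           (2 * standing_wave_deriv z Lt 0)"
proof -
  let ?U = "\<lambda>e x. standing_wave z Lt (x + chain_pos L (fst e - 1))"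
  let ?U' = "\<lambda>e x. standing_wave_deriv z Lt (x + chain_pos L (fst e - 1))"
  let ?phi = "\<lambda>v. standing_wave z Lt (chain_pos L v)"
  have "Lt > 0" unfolding Lt_def using assms(1,2) by (intro sum_pos) auto
  have far_end: "chain_pos L m = Lt / 2" by (simp add: chain_pos_def Lt_def)
  have edge_end: "chain_len L e + chain_pos L (fst e - 1) = chain_pos L (fst e)"
    if e: "e \<in> chain_edges m" for e
  proof -
    obtain j where "fst e = Suc j" using e unfolding chain_edges_def by (cases "fst e") auto
    then show ?thesis by (simp add: chain_len_def chain_pos_Suc)
  qed
  have kirchhoff: "flux (chain_edges m) (chain_len L) chain_ini chain_ter ?U' v = 0"
    if v: "v \<in> {1..m}" for v
  proof -
    obtain j where j: "v = Suc j" using v by (cases v) auto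
    have "L v / 2 + chain_pos L (v - 1) = chain_pos L v" by (simp add: j chain_pos_Suc)
    moreover have "standing_wave_deriv z Lt (chain_pos L v) = 0" if "v = m"
      using that far_end standing_wave_deriv_middle by (simp only:)
    ultimately show ?thesis
      using v unfolding flux_chain by auto
  qed
  have "qg_solution (chain_edges m) (chain_len L) chain_ini chain_ter 0 z ?U ?U' ?phi"
    unfolding qg_solution_def graph_vertices_chain[OF assms(1)]
    using edge_eig_sol_standing_wave edge_end kirchhoff
    by (auto simp: chain_ini_def chain_ter_def)
  moreover have "?phi 0 = 1"
    using standing_wave_ends(1)[OF assms(3)] \<open>Lt > 0\<close> by simp
  moreover have "flux (chain_edges m) (chain_len L) chain_ini chain_ter ?U' 0 =
      2 * standing_wave_deriv z Lt 0"
    using assms(1) unfolding flux_chain by simp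
  ultimately show ?thesis unfolding is_M_value_def by blast
qed

theorem theorem3:
  fixes m :: nat and L :: "nat \<Rightarrow> real" and z :: complex
  assumes "m \<ge> 1" and "\<forall>i\<in>{1..m}. L i > 0" and "Im z \<noteq> 0"
  shows "M_function (chain_edges m) (chain_len L) chain_ini chain_ter (0::nat) z =
         M_function {()} (\<lambda>_. \<Sum>i=1..m. L i) (\<lambda>_. ()) (\<lambda>_. ()) () z"
proof -
  let ?Lt = "\<Sum>i=1..m. L i"
  have "?Lt > 0" using assms(1,2) by (intro sum_pos) auto
  have "finite (chain_edges m)" by (simp add: chain_edges_def)
  moreover have "\<forall>e\<in>chain_edges m. chain_len L e > 0"
    using assms(2) by (auto simp: chain_edges_def chain_len_def)
  ultimately have "M_function (chain_edges m) (chain_len L) chain_ini chain_ter 0 z =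
      2 * standing_wave_deriv z ?Lt 0"
    using assms(3) chain_is_M_value[OF assms] by (rule M_function_eqI)
  also have "\<dots> = M_function {()} (\<lambda>_. ?Lt) (\<lambda>_. ()) (\<lambda>_. ()) () z"
    using assms(3) loop_is_M_value[OF assms(3)] \<open>?Lt > 0\<close> by (intro M_function_eqI[symmetric]) auto
  finally show ?thesis .
qed

end
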